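(* Let $F$, $G$, $\pi$, $\Pi$ be as in the context, let $\lambda$ be a symmetric Markov measure on $\Sigma_A$ and $\lambda_0=\pi_*\lambda$. If $\mu$ is a physical measure with respect to $G$ and $\lambda$, then $\Pi_*\mu$ is a physical measure with respect to $F$ and $\lambda_0$. Moreover, if $V$ is the basin of $\mu$, then $\Pi(V)$ is contained in the basin of $\Pi_*\mu$.
   Context: $I=[0,1]$, $R(x)=1-x$. $F(\xi,p)=(\sigma(\xi),f_{\xi_0}(p))$ on $\Sigma_N\times I$, $\Sigma_N=\{1,\ldots,N\}^{\mathbb Z}$, with $f_i$ $C^1$-diffeomorphisms onto their images. $\mathcal I_P$ / $\mathcal I_R$: indices of orientation preserving / reversing $f_i$. $A=(a_{ij})_{i,j=1}^{2N}$ with $a_{ij}=1$ if ($i\in\mathcal I_P$, $j\le N$), or ($i\in\mathcal I_R$, $j>N$), or ($i-N\in\mathcal I_P$, $j>N$), or ($i-N\in\mathcal I_R$, $j\le N$), else $0$; $\Sigma_A$ the $A$-admissible sequences in $\{1,\ldots,2N\}^{\mathbb Z}$ with shift $\sigma_A$; $\pi(\omega)_n=\overline{\omega_n}$ ($\overline i=i$ for $i\le N$, $\overline i=i-N$ otherwise). $G(\omega,x)=(\sigma_A(\omega),g_{\omega_0}(x))$ with $g_i=f_i$, $g_{i+N}=R\circ f_i\circ R$ ($i\in\mathcal I_P$), $g_i=R\circ f_i$, $g_{i+N}=f_i\circ R$ ($i\in\mathcal I_R$). $C=\{\omega\colon\omega_0\le N\}$; $\Pi(\omega,x)=(\pi(\omega),x)$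 if $\omega\in C$, $(\pi(\omega),R(x))$ otherwise. A Markov measure on $\Sigma_A$ with probability vector $(p_i)$ and stochastic matrix $(P_{ij})$ is symmetric if $p_i=p_{i+N}$, $P_{ij}=P_{(i+N)(j+N)}$, $P_{i(j+N)}=P_{(i+N)j}$ for $i,j\le N$. For a step skew-product $H$ on $\Sigma\times I$ and a Markov measure $\lambda$ on $\Sigma$, an $H$-invariant probability $\mu$ is physical with respect to $H$ and $\lambda$ if its basin $V=\{(\xi,p)\colon\frac1n\sum_{i=0}^{n-1}\varphi(H^i(\xi,p))\to\int\varphi\,d\mu\ \text{for all }\varphi\in C^0(\Sigma\times I)\}$ satisfies $(\lambda\times\mathrm{Leb})(V)>0$. *)

theory Defs
  imports "HOL-Analysis.Analysis" "HOL-Probability.Probability"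
begin

text \<open>Sequences in the full shift are modelled as functions int => nat
  (product topology from Function_Topology, nat discrete); measures on them
  carry the Borel sigma-algebra of that topology.\<close>

type_synonym seq = "int \<Rightarrow> nat"

definition II :: "real set" where "II = {0..1}"

definition R :: "real \<Rightarrow> real" where "R x = 1 - x"

definition shift :: "seq \<Rightarrow> seq" where "shift \<xi> = (\<lambda>n. \<xi> (n + 1))"

definition SigmaN :: "nat \<Rightarrow> seq set" where
  "SigmaN N = {\<xi>. \<forall>n. \<xi> n \<in> {1..N}}"

definition C1_diffeo_onto_image :: "(real \<Rightarrow> real) \<Rightarrow> bool" where
  "C1_diffeo_onto_image h \<longleftrightarrow> h ` II \<subseteq> II \<and> inj_on h II \<and>
     (\<exists>h'. (\<forall>x\<in>II. (h has_real_derivative h' x) (at x within II)) \<and> continuous_on II h') \<and>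
     (\<exists>k'. (\<forall>y\<in>h ` II. (inv_into II h has_real_derivative k' y) (at y within h ` II))
           \<and> continuous_on (h ` II) k')"

definition IP :: "nat \<Rightarrow> (nat \<Rightarrow> real \<Rightarrow> real) \<Rightarrow> nat set" where
  "IP N f = {i \<in> {1..N}. strict_mono_on II (f i)}"

definition IR :: "nat \<Rightarrow> (nat \<Rightarrow> real \<Rightarrow> real) \<Rightarrow> nat set" where
  "IR N f = {i \<in> {1..N}. strict_antimono_on II (f i)}"

text \<open>The transition matrix A (entries a_ij = 1 encoded as True).\<close>
definition Aadm :: "nat \<Rightarrow> (nat \<Rightarrow> real \<Rightarrow> real) \<Rightarrow> nat \<Rightarrow> nat \<Rightarrow> bool" where
  "Aadm N f i j \<longleftrightarrow> i \<in> {1..2*N} \<and> j \<in> {1..2*N} \<and>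
     ((i \<in> IP N f \<and> j \<le> N) \<or> (i \<in> IR N f \<and> j > N) \<or>
      (i > N \<and> i - N \<in> IP N f \<and> j > N) \<or> (i > N \<and> i - N \<in> IR N f \<and> j \<le> N))"

definition SigmaA :: "nat \<Rightarrow> (nat \<Rightarrow> real \<Rightarrow> real) \<Rightarrow> seq set" where
  "SigmaA N f = {\<omega>. (\<forall>n. \<omega> n \<in> {1..2*N}) \<and> (\<forall>n. Aadm N f (\<omega> n) (\<omega> (n + 1)))}"

definition bar :: "nat \<Rightarrow> nat \<Rightarrow> nat" where
  "bar N i = (if i \<le> N then i else i - N)"

definition proj :: "nat \<Rightarrow> seq \<Rightarrow> seq" where
  "proj N \<omega> = (\<lambda>n. bar N (\<omega> n))"

definition gmap :: "nat \<Rightarrow> (nat \<Rightarrow> real \<Rightarrow> real) \<Rightarrow> nat \<Rightarrow> real \<Rightarrow> real" where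
  "gmap N f i =
     (if i \<le> N then (if i \<in> IP N f then f i else R \<circ> f i)
      else (if i - N \<in> IP N f then R \<circ> f (i - N) \<circ> R else f (i - N) \<circ> R))"

definition Fmap :: "(nat \<Rightarrow> real \<Rightarrow> real) \<Rightarrow> seq \<times> real \<Rightarrow> seq \<times> real" where
  "Fmap f = (\<lambda>(\<xi>, p). (shift \<xi>, f (\<xi> 0) p))"

definition Gmap :: "nat \<Rightarrow> (nat \<Rightarrow> real \<Rightarrow> real) \<Rightarrow> seq \<times> real \<Rightarrow> seq \<times> real" where
  "Gmap N f = (\<lambda>(\<omega>, x). (shift \<omega>, gmap N f (\<omega> 0) x))"

definition PiMap :: "nat \<Rightarrow> seq \<times> real \<Rightarrow> seq \<times> real" where
  "PiMap N = (\<lambda>(\<omega>, x). (proj N \<omega>, if \<omega> 0 \<le> N then x else R x))"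

definition markov_measure ::
  "nat \<Rightarrow> (nat \<Rightarrow> nat \<Rightarrow> bool) \<Rightarrow> (nat \<Rightarrow> real) \<Rightarrow> (nat \<Rightarrow> nat \<Rightarrow> real) \<Rightarrow> seq measure \<Rightarrow> bool" where
  "markov_measure M adm p P lam \<longleftrightarrow>
     (\<forall>i\<in>{1..M}. p i \<ge> 0) \<and> (\<Sum>i=1..M. p i) = 1 \<and>
     (\<forall>i\<in>{1..M}. \<forall>j\<in>{1..M}. P i j \<ge> 0) \<and> (\<forall>i\<in>{1..M}. (\<Sum>j=1..M. P i j) = 1) \<and>
     (\<forall>i\<in>{1..M}. \<forall>j\<in>{1..M}. \<not> adm i j \<longrightarrow> P i j = 0) \<and>
     prob_space lam \<and> sets lam = sets (borel :: seq measure) \<and>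
     (\<forall>(m::int) (w::nat list). w \<noteq> [] \<longrightarrow> set w \<subseteq> {1..M} \<longrightarrow>
        measure lam {\<omega>. \<forall>k<length w. \<omega> (m + int k) = w ! k}
          = p (w ! 0) * (\<Prod>k<length w - 1. P (w ! k) (w ! (k + 1))))"

definition symmetric_markov ::
  "nat \<Rightarrow> (nat \<Rightarrow> real) \<Rightarrow> (nat \<Rightarrow> nat \<Rightarrow> real) \<Rightarrow> bool" where
  "symmetric_markov N p P \<longleftrightarrow>
     (\<forall>i\<in>{1..N}. p i = p (i + N)) \<and>
     (\<forall>i\<in>{1..N}. \<forall>j\<in>{1..N}. P i j = P (i + N) (j + N) \<and> P i (j + N) = P (i + N) j)"

definition invariant_prob ::
  "(seq \<times> real \<Rightarrow> seq \<times> real) \<Rightarrow> seq set \<Rightarrow> (seq \<times> real) measure \<Rightarrow> bool" where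
  "invariant_prob H Sig mu \<longleftrightarrow>
     prob_space mu \<and> sets mu = sets (borel :: (seq \<times> real) measure) \<and>
     emeasure mu (Sig \<times> II) = 1 \<and>
     (\<forall>A\<in>sets mu. emeasure mu (H -` A \<inter> (Sig \<times> II)) = emeasure mu A)"

definition basin ::
  "(seq \<times> real \<Rightarrow> seq \<times> real) \<Rightarrow> seq set \<Rightarrow> (seq \<times> real) measure \<Rightarrow> (seq \<times> real) set" where
  "basin H Sig mu = {z \<in> Sig \<times> II. \<forall>\<phi> :: seq \<times> real \<Rightarrow> real. continuous_on (Sig \<times> II) \<phi> \<longrightarrow>
      (\<lambda>n. (\<Sum>i<n. \<phi> ((H ^^ i) z)) / real n) \<longlonglongrightarrow> (LINT w:Sig \<times> II|mu. \<phi> w)}"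

definition physical ::
  "(seq \<times> real \<Rightarrow> seq \<times> real) \<Rightarrow> seq set \<Rightarrow> seq measure \<Rightarrow> (seq \<times> real) measure \<Rightarrow> bool" where
  "physical H Sig lam mu \<longleftrightarrow> invariant_prob H Sig mu \<and>
     emeasure (lam \<Otimes>\<^sub>M lborel) (basin H Sig mu) > 0"

end

theory Submission
  imports Defs
begin

text \<open>
  \<open>\<Pi>\<close> is continuous and semiconjugates \<open>G\<close> on \<open>\<Sigma>\<^sub>A \<times> I\<close> to \<open>F\<close> on \<open>\<Sigma>\<^sub>N \<times> I\<close>, so the Birkhoff averages of
  \<open>\<phi> \<circ> \<Pi>\<close> along a \<open>G\<close>-orbit are the Birkhoff averages of \<open>\<phi>\<close> along the image \<open>F\<close>-orbit, and, as
  \<open>\<mu>\<close> lives on \<open>\<Sigma>\<^sub>A \<times> I\<close>, \<open>\<integral> \<phi> \<circ> \<Pi> d\<mu> = \<integral> \<phi> d\<Pi>\<^sub>*\<mu>\<close>. Hence \<open>\<Pi>\<^sub>*\<mu>\<close> is \<open>F\<close>-invariant and \<open>\<Pi>\<close> maps the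
  basin of \<open>\<mu>\<close> into the basin of \<open>\<Pi>\<^sub>*\<mu>\<close>. Since \<open>R\<close> preserves Lebesgue measure, \<open>\<Pi>\<close> pushes
  \<open>\<lambda> \<times> Leb\<close> forward to \<open>\<lambda>\<^sub>0 \<times> Leb\<close>, so the basin of \<open>\<Pi>\<^sub>*\<mu>\<close> has \<open>\<lambda>\<^sub>0 \<times> Leb\<close>-measure at least the
  (positive) \<open>\<lambda> \<times> Leb\<close>-measure of the basin of \<open>\<mu>\<close>. The one delicate point is that the basin of
  \<open>\<Pi>\<^sub>*\<mu>\<close> is a Borel set: by Stone--Weierstrass it suffices to test convergence on the countably
  many monomials in the coordinate indicators and the fibre coordinate.
\<close>

section \<open>Birkhoff averages\<close>

lemma funpow_in_invariant: "T ` K \<subseteq> K \<Longrightarrow> z \<in> K \<Longrightarrow> (T ^^ n) z \<in> K"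
  by (induction n) auto

lemma funpow_semiconj_on:
  assumes "G ` S \<subseteq> S" and "\<And>z. z \<in> S \<Longrightarrow> h (G z) = F (h z)" and "z \<in> S"
  shows "h ((G ^^ n) z) = (F ^^ n) (h z)"
  by (induction n) (use assms funpow_in_invariant[OF assms(1,3)] in auto)

lemma continuous_on_funpow:
  assumes "continuous_on K T" and "T ` K \<subseteq> K"
  shows "continuous_on K (T ^^ n)"
proof (induction n)
  case (Suc n)
  have "(T ^^ n) ` K \<subseteq> K" using funpow_in_invariant[OF assms(2)] by auto
  with Suc show ?case by (auto intro: continuous_on_compose2[OF assms(1)])
qed (simp add: continuous_on_id)

definition birkhoff_avg :: "('a \<Rightarrow> 'a) \<Rightarrow> ('a \<Rightarrow> real) \<Rightarrow> 'a \<Rightarrow> nat \<Rightarrow> real" where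
  "birkhoff_avg T \<phi> z n = (\<Sum>i<n. \<phi> ((T ^^ i) z)) / real n"

definition birkhoff_basin :: "('a \<Rightarrow> 'a) \<Rightarrow> 'a::topological_space set \<Rightarrow> 'a measure \<Rightarrow> 'a set" where
  "birkhoff_basin T K \<nu> = {z \<in> K. \<forall>\<phi>. continuous_on K \<phi> \<longrightarrow>
     birkhoff_avg T \<phi> z \<longlonglongrightarrow> (LINT w:K|\<nu>. \<phi> w)}"

lemma birkhoff_avg_semiconj_on:
  assumes "G ` S \<subseteq> S" and "\<And>z. z \<in> S \<Longrightarrow> h (G z) = F (h z)" and "z \<in> S"
  shows "birkhoff_avg F \<phi> (h z) = birkhoff_avg G (\<lambda>w. \<phi> (h w)) z"
  using funpow_semiconj_on[of G S h F, OF assms] by (simp add: birkhoff_avg_def fun_eq_iff)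

lemma birkhoff_avg_add:
  "birkhoff_avg T (\<lambda>x. \<phi> x + \<psi> x) z n = birkhoff_avg T \<phi> z n + birkhoff_avg T \<psi> z n"
  by (simp add: birkhoff_avg_def sum.distrib add_divide_distrib)

lemma birkhoff_avg_cmult: "birkhoff_avg T (\<lambda>x. c * \<phi> x) z n = c * birkhoff_avg T \<phi> z n"
  by (simp add: birkhoff_avg_def sum_distrib_left)

lemma birkhoff_avg_diff_le:
  assumes "\<And>i. \<bar>\<phi> ((T ^^ i) z) - \<psi> ((T ^^ i) z)\<bar> \<le> e" and "e \<ge> 0"
  shows "\<bar>birkhoff_avg T \<phi> z n - birkhoff_avg T \<psi> z n\<bar> \<le> e"
proof (cases "n = 0")
  case False
  have "\<bar>birkhoff_avg T \<phi> z n - birkhoff_avg T \<psi> z n\<bar>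
      = \<bar>\<Sum>i<n. \<phi> ((T ^^ i) z) - \<psi> ((T ^^ i) z)\<bar> / real n"
    by (simp add: birkhoff_avg_def diff_divide_distrib[symmetric] sum_subtractf)
  also have "\<dots> \<le> (\<Sum>i<n. e) / real n"
    by (intro divide_right_mono order.trans[OF sum_abs sum_mono] assms) simp_all
  also have "\<dots> = e" using False by simp
  finally show ?thesis .
qed (simp add: birkhoff_avg_def assms)

lemma continuous_on_birkhoff_avg:
  assumes "continuous_on K \<phi>" and "continuous_on K T" and "T ` K \<subseteq> K"
  shows "continuous_on K (\<lambda>z. birkhoff_avg T \<phi> z n)"
proof -
  have "continuous_on K (\<lambda>z. \<phi> ((T ^^ i) z))" for i
    by (rule continuous_on_compose2[OF assms(1) continuous_on_funpow[OF assms(2,3)]])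
      (use funpow_in_invariant[OF assms(3)] in auto)
  then show ?thesis
    unfolding birkhoff_avg_def by (cases "n = 0") (auto intro!: continuous_intros)
qed

lemma continuous_on_compact_set_integrable:
  fixes \<phi> :: "'a::topological_space \<Rightarrow> real"
  assumes "finite_measure \<nu>" and "sets \<nu> = sets borel" and "compact K" and "K \<in> sets borel"
    and "continuous_on K \<phi>"
  shows "set_integrable \<nu> K \<phi>"
proof -
  interpret finite_measure \<nu> by fact
  obtain B where B: "\<forall>x\<in>K. \<bar>\<phi> x\<bar> \<le> B"
    using compact_imp_bounded[OF compact_continuous_image[OF assms(5,3)]] by (auto simp: bounded_iff)
  have "(\<lambda>x. indicator K x *\<^sub>R \<phi> x) \<in> borel_measurable \<nu>"
    using borel_measurable_continuous_on_indicator[OF assms(4,5)]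
    by (simp add: measurable_cong_sets[OF assms(2) refl])
  moreover have "norm (indicator K x *\<^sub>R \<phi> x) \<le> max B 0" for x
    using B by (cases "x \<in> K") auto
  ultimately show ?thesis
    unfolding set_integrable_def by (intro integrable_const_bound[where B="max B 0"]) auto
qed

lemma set_integral_diff_le:
  fixes \<phi> \<psi> :: "'a \<Rightarrow> real"
  assumes "prob_space \<nu>" and "set_integrable \<nu> K \<phi>" and "set_integrable \<nu> K \<psi>"
    and "\<And>x. x \<in> K \<Longrightarrow> \<bar>\<phi> x - \<psi> x\<bar> \<le> e" and "e \<ge> 0"
  shows "\<bar>(LINT x:K|\<nu>. \<phi> x) - (LINT x:K|\<nu>. \<psi> x)\<bar> \<le> e"
proof -
  interpret prob_space \<nu> by fact
  have int: "integrable \<nu> (\<lambda>x. indicator K x *\<^sub>R (\<phi> x - \<psi> x))"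
    using set_integral_diff(1)[OF assms(2,3)] by (simp add: set_integrable_def)
  have bound: "- e \<le> indicator K x *\<^sub>R (\<phi> x - \<psi> x)" "indicator K x *\<^sub>R (\<phi> x - \<psi> x) \<le> e" for x
    using assms(4,5) by (cases "x \<in> K"; force)+
  have "- e \<le> (LINT x:K|\<nu>. \<phi> x - \<psi> x)" "(LINT x:K|\<nu>. \<phi> x - \<psi> x) \<le> e"
    unfolding set_lebesgue_integral_def
    by (intro integral_ge_const integral_le_const int AE_I2 bound)+
  then show ?thesis
    by (simp add: set_integral_diff(2)[OF assms(2,3)] abs_le_iff)
qed

lemma tendsto_birkhoff_avg_uniform_approx:
  fixes \<phi> :: "'a::topological_space \<Rightarrow> real"
  assumes "prob_space \<nu>" and "sets \<nu> = sets borel" and "compact K" and "K \<in> sets borel"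
    and "T ` K \<subseteq> K" and "z \<in> K" and "continuous_on K \<phi>"
    and approx: "\<And>e. e > 0 \<Longrightarrow> \<exists>\<psi>. continuous_on K \<psi> \<and> (\<forall>x\<in>K. \<bar>\<phi> x - \<psi> x\<bar> \<le> e) \<and>
                   birkhoff_avg T \<psi> z \<longlonglongrightarrow> (LINT x:K|\<nu>. \<psi> x)"
  shows "birkhoff_avg T \<phi> z \<longlonglongrightarrow> (LINT x:K|\<nu>. \<phi> x)"
proof (rule LIMSEQ_I)
  fix r :: real assume "r > 0"
  then obtain \<psi> where \<psi>: "continuous_on K \<psi>" and close: "\<forall>x\<in>K. \<bar>\<phi> x - \<psi> x\<bar> \<le> r / 3"
    and lim: "birkhoff_avg T \<psi> z \<longlonglongrightarrow> (LINT x:K|\<nu>. \<psi> x)"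
    using approx[of "r / 3"] by auto
  obtain M where M: "\<forall>n\<ge>M. \<bar>birkhoff_avg T \<psi> z n - (LINT x:K|\<nu>. \<psi> x)\<bar> < r / 3"
    using LIMSEQ_D[OF lim, of "r / 3"] \<open>r > 0\<close> by auto
  have fin: "finite_measure \<nu>"
    using \<open>prob_space \<nu>\<close> by (simp add: prob_space_def)
  have integrals_close: "\<bar>(LINT x:K|\<nu>. \<phi> x) - (LINT x:K|\<nu>. \<psi> x)\<bar> \<le> r / 3"
    using close \<open>r > 0\<close> \<open>prob_space \<nu>\<close>
    by (intro set_integral_diff_le continuous_on_compact_set_integrable[OF fin] assms \<psi>) auto
  have avgs_close: "\<bar>birkhoff_avg T \<phi> z n - birkhoff_avg T \<psi> z n\<bar> \<le> r / 3" for n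
    using close funpow_in_invariant[OF assms(5,6)] \<open>r > 0\<close> by (intro birkhoff_avg_diff_le) auto
  have "\<bar>birkhoff_avg T \<phi> z n - (LINT x:K|\<nu>. \<phi> x)\<bar> < r" if "n \<ge> M" for n
    using M[rule_format, OF that] avgs_close[of n] integrals_close by linarith
  then show "\<exists>M. \<forall>n\<ge>M. norm (birkhoff_avg T \<phi> z n - (LINT x:K|\<nu>. \<phi> x)) < r"
    by auto
qed

section \<open>Basins are Borel sets\<close>

definition monomial :: "('i \<Rightarrow> 'a \<Rightarrow> real) \<Rightarrow> 'i list \<Rightarrow> 'a \<Rightarrow> real" where
  "monomial g is x = (\<Prod>i\<leftarrow>is. g i x)"

definition polynomial :: "('i \<Rightarrow> 'a \<Rightarrow> real) \<Rightarrow> (real \<times> 'i list) list \<Rightarrow> 'a \<Rightarrow> real" where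
  "polynomial g cs x = (\<Sum>(c, is)\<leftarrow>cs. c * monomial g is x)"

lemma polynomial_Nil [simp]: "polynomial g [] x = 0"
  and polynomial_Cons [simp]: "polynomial g ((c, is) # cs) x = c * monomial g is x + polynomial g cs x"
  by (simp_all add: polynomial_def)

lemma monomial_Nil [simp]: "monomial g [] x = 1"
  and monomial_Cons [simp]: "monomial g (i # is) x = g i x * monomial g is x"
  by (simp_all add: monomial_def)

lemma polynomial_append: "polynomial g (cs @ ds) x = polynomial g cs x + polynomial g ds x"
  by (simp add: polynomial_def)

lemma monomial_append: "monomial g (is @ js) x = monomial g is x * monomial g js x"
  by (simp add: monomial_def)

lemma polynomial_mult:
  "polynomial g [(c * d, is @ js). (c, is) \<leftarrow> cs, (d, js) \<leftarrow> ds] x = polynomial g cs x * polynomial g ds x"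
proof (induction cs)
  case (Cons cis cs)
  obtain c "is" where [simp]: "cis = (c, is)" by fastforce
  have "polynomial g [(c * d, is @ js). (d, js) \<leftarrow> ds] x = c * monomial g is x * polynomial g ds x"
    by (induction ds) (auto simp: monomial_append algebra_simps)
  with Cons show ?case
    by (simp add: polynomial_append algebra_simps)
qed simp

lemma continuous_on_monomial:
  "(\<And>i. continuous_on K (g i)) \<Longrightarrow> continuous_on K (monomial g is)"
  by (induction "is") (simp_all add: monomial_def continuous_on_mult)

lemma continuous_on_polynomial:
  "(\<And>i. continuous_on K (g i)) \<Longrightarrow> continuous_on K (polynomial g cs)"
proof (induction cs)
  case (Cons cis cs)
  then show ?case
    by (cases cis) (simp add: continuous_on_add continuous_on_mult_left continuous_on_monomial)
qed simp

lemma polynomial_coordinates_uniform_approx: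
  fixes S :: "('i::countable \<Rightarrow> real) set"
  assumes "compact S" and "continuous_on S \<phi>" and "e > 0"
  shows "\<exists>cs. \<forall>y\<in>S. \<bar>\<phi> y - polynomial (\<lambda>i y. y i) cs y\<bar> < e"
proof -
  let ?poly = "polynomial (\<lambda>i y. y i)"
  have "\<exists>p. (\<exists>cs. p = ?poly cs) \<and> (\<forall>y\<in>S. \<bar>\<phi> y - p y\<bar> < e)"
  proof (rule Stone_Weierstrass_HOL[OF assms(1) _ _ _ _ _ assms(2,3)])
    show "\<exists>cs. (\<lambda>_. c) = ?poly cs" for c
      by (intro exI[of _ "[(c, [])]"]) (simp add: fun_eq_iff)
    show "\<exists>cs. (\<lambda>y. p y + q y) = ?poly cs" "\<exists>cs. (\<lambda>y. p y * q y) = ?poly cs"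
      if pq: "(\<exists>cs. p = ?poly cs) \<and> (\<exists>cs. q = ?poly cs)" for p q
    proof -
      from pq obtain cs ds where "p = ?poly cs" "q = ?poly ds" by blast
      then have "(\<lambda>y. p y + q y) = ?poly (cs @ ds)"
        "(\<lambda>y. p y * q y) = ?poly [(c * d, is @ js). (c, is) \<leftarrow> cs, (d, js) \<leftarrow> ds]"
        by (simp_all only: fun_eq_iff polynomial_append polynomial_mult) simp_all
      then show "\<exists>cs. (\<lambda>y. p y + q y) = ?poly cs" "\<exists>cs. (\<lambda>y. p y * q y) = ?poly cs"
        by blast+
    qed
    show "\<exists>p. (\<exists>cs. p = ?poly cs) \<and> p x \<noteq> p y" if xy: "x \<in> S \<and> y \<in> S \<and> x \<noteq> y" for x y
    proof -
      obtain i where "x i \<noteq> y i" using xy by auto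
      then show ?thesis
        by (intro exI[of _ "?poly [(1, [i])]"] conjI exI[of _ "[(1, [i])]"]) simp_all
    qed
  qed (auto intro: continuous_on_polynomial continuous_on_subset[OF continuous_on_product_coordinates])
  then show ?thesis by blast
qed

text \<open>No Hausdorff assumption on \<open>'a\<close> is needed: the countable point-separating family embeds
  the compact set \<open>K\<close> homeomorphically into the metric space \<open>'i \<Rightarrow> real\<close>, where Stone--Weierstrass
  applies to the coordinate polynomials. (The type \<open>seq \<times> real\<close> is not a \<open>t2_space\<close> instance.)\<close>
lemma polynomial_uniform_approx:
  fixes g :: "'i::countable \<Rightarrow> 'a::topological_space \<Rightarrow> real"
  assumes "compact K" and "\<And>i. continuous_on K (g i)"
    and "\<And>x y. x \<in> K \<Longrightarrow> y \<in> K \<Longrightarrow> x \<noteq> y \<Longrightarrow> \<exists>i. g i x \<noteq> g i y"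
    and "continuous_on K \<phi>" and "e > 0"
  shows "\<exists>cs. \<forall>x\<in>K. \<bar>\<phi> x - polynomial g cs x\<bar> < e"
proof -
  define E where "E x = (\<lambda>i. g i x)" for x
  have E: "continuous_on K E"
    unfolding E_def by (intro continuous_on_coordinatewise_then_product assms(2))
  have "inj_on E K"
    using assms(3) by (force simp: inj_on_def E_def fun_eq_iff)
  then have E_inv: "continuous_on (E ` K) (the_inv_into K E)" "\<And>x. x \<in> K \<Longrightarrow> the_inv_into K E (E x) = x"
    by (auto intro: continuous_on_inv_into[OF E assms(1)] the_inv_into_f_f)
  have "continuous_on (E ` K) (\<lambda>y. \<phi> (the_inv_into K E y))"
    using E_inv by (intro continuous_on_compose2[OF assms(4) E_inv(1)]) auto
  then obtain cs where cs: "\<forall>y\<in>E ` K. \<bar>\<phi> (the_inv_into K E y) - polynomial (\<lambda>i y. y i) cs y\<bar> < e"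
    using polynomial_coordinates_uniform_approx[OF compact_continuous_image[OF E assms(1)] _ assms(5)]
    by blast
  have "polynomial (\<lambda>i y. y i) cs (E x) = polynomial g cs x" for x
    by (simp add: polynomial_def monomial_def E_def)
  then show ?thesis
    using cs E_inv(2) by auto
qed

lemma tendsto_birkhoff_avg_polynomial:
  fixes g :: "'i \<Rightarrow> 'a::topological_space \<Rightarrow> real"
  assumes "prob_space \<nu>" and "sets \<nu> = sets borel" and "compact K" and "K \<in> sets borel"
    and "\<And>i. continuous_on K (g i)"
    and monomials: "\<And>is. birkhoff_avg T (monomial g is) z \<longlonglongrightarrow> (LINT x:K|\<nu>. monomial g is x)"
  shows "birkhoff_avg T (polynomial g cs) z \<longlonglongrightarrow> (LINT x:K|\<nu>. polynomial g cs x)"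
proof (induction cs)
  case Nil
  then show ?case by (simp add: birkhoff_avg_def)
next
  case (Cons cis cs)
  obtain c "is" where [simp]: "cis = (c, is)" by fastforce
  have fin: "finite_measure \<nu>"
    using \<open>prob_space \<nu>\<close> by (simp add: prob_space_def)
  have integrable: "set_integrable \<nu> K (monomial g is)" "set_integrable \<nu> K (polynomial g cs)"
    by (intro continuous_on_compact_set_integrable[OF fin assms(2-4)]
        continuous_on_monomial continuous_on_polynomial assms(5))+
  have poly_eq: "polynomial g (cis # cs) = (\<lambda>x. c * monomial g is x + polynomial g cs x)"
    by (simp add: fun_eq_iff)
  have avg_eq: "birkhoff_avg T (polynomial g (cis # cs)) z
      = (\<lambda>n. c * birkhoff_avg T (monomial g is) z n + birkhoff_avg T (polynomial g cs) z n)"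
    unfolding poly_eq by (simp add: fun_eq_iff birkhoff_avg_add birkhoff_avg_cmult)
  have integral_eq: "(LINT x:K|\<nu>. polynomial g (cis # cs) x)
      = c * (LINT x:K|\<nu>. monomial g is x) + (LINT x:K|\<nu>. polynomial g cs x)"
    using integrable by (simp add: set_integral_add set_integral_mult_right)
  show ?case
    unfolding avg_eq integral_eq by (intro tendsto_intros Cons monomials)
qed

lemma birkhoff_basin_eq_monomials:
  fixes g :: "'i::countable \<Rightarrow> 'a::topological_space \<Rightarrow> real"
  assumes "prob_space \<nu>" and "sets \<nu> = sets borel" and "compact K" and "K \<in> sets borel"
    and "T ` K \<subseteq> K"
    and "\<And>i. continuous_on K (g i)"
    and "\<And>x y. x \<in> K \<Longrightarrow> y \<in> K \<Longrightarrow> x \<noteq> y \<Longrightarrow> \<exists>i. g i x \<noteq> g i y"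
  shows "birkhoff_basin T K \<nu>
    = {z \<in> K. \<forall>is. birkhoff_avg T (monomial g is) z \<longlonglongrightarrow> (LINT x:K|\<nu>. monomial g is x)}"
    (is "_ = ?M")
proof (intro equalityI subsetI)
  fix z assume "z \<in> birkhoff_basin T K \<nu>"
  then show "z \<in> ?M"
    by (auto simp: birkhoff_basin_def continuous_on_monomial assms(6))
next
  fix z assume "z \<in> ?M"
  then have "z \<in> K" and monomials: "\<And>is. birkhoff_avg T (monomial g is) z \<longlonglongrightarrow> (LINT x:K|\<nu>. monomial g is x)"
    by auto
  have "birkhoff_avg T \<phi> z \<longlonglongrightarrow> (LINT x:K|\<nu>. \<phi> x)" if \<phi>: "continuous_on K \<phi>" for \<phi>
  proof (rule tendsto_birkhoff_avg_uniform_approx[OF assms(1-5) \<open>z \<in> K\<close> \<phi>])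
    fix e :: real assume "e > 0"
    then obtain cs where "\<forall>x\<in>K. \<bar>\<phi> x - polynomial g cs x\<bar> < e"
      using polynomial_uniform_approx[OF assms(3,6,7) \<phi>] by blast
    then show "\<exists>\<psi>. continuous_on K \<psi> \<and> (\<forall>x\<in>K. \<bar>\<phi> x - \<psi> x\<bar> \<le> e) \<and>
                 birkhoff_avg T \<psi> z \<longlonglongrightarrow> (LINT x:K|\<nu>. \<psi> x)"
      by (intro exI[of _ "polynomial g cs"] conjI continuous_on_polynomial assms(6)
          tendsto_birkhoff_avg_polynomial[OF assms(1-4,6) monomials]) (auto intro: less_imp_le)
  qed
  with \<open>z \<in> K\<close> show "z \<in> birkhoff_basin T K \<nu>"
    by (simp add: birkhoff_basin_def)
qed

lemma birkhoff_basin_borel: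
  fixes g :: "'i::countable \<Rightarrow> 'a::topological_space \<Rightarrow> real"
  assumes "prob_space \<nu>" and "sets \<nu> = sets borel" and "compact K" and "K \<in> sets borel"
    and "continuous_on K T" and "T ` K \<subseteq> K"
    and "\<And>i. continuous_on K (g i)"
    and "\<And>x y. x \<in> K \<Longrightarrow> y \<in> K \<Longrightarrow> x \<noteq> y \<Longrightarrow> \<exists>i. g i x \<noteq> g i y"
  shows "birkhoff_basin T K \<nu> \<in> sets borel"
proof -
  have [measurable]: "(\<lambda>z. birkhoff_avg T (monomial g is) z n) \<in> borel_measurable (restrict_space borel K)"
    for "is" n
    by (intro borel_measurable_continuous_on_restrict continuous_on_birkhoff_avg
        continuous_on_monomial assms(5-7))
  have "(Cauchy X \<and> lim X = c) \<longleftrightarrow> X \<longlonglongrightarrow> c" for X :: "nat \<Rightarrow> real" and c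
    by (metis Cauchy_convergent_iff convergent_LIMSEQ_iff convergentI limI)
  then have "birkhoff_basin T K \<nu> = {z \<in> space (restrict_space borel K).
      \<forall>is. Cauchy (birkhoff_avg T (monomial g is) z) \<and>
        lim (birkhoff_avg T (monomial g is) z) = (LINT x:K|\<nu>. monomial g is x)}"
    by (simp add: birkhoff_basin_eq_monomials[OF assms(1-4,6-8)] space_restrict_space)
  also have "\<dots> \<in> sets (restrict_space borel K)"
    by measurable
  finally show ?thesis
    using assms(4) by (simp add: sets_restrict_space_iff)
qed

section \<open>Push-forward along a semiconjugacy\<close>

lemma continuous_on_vimage_Int_sets_borel:
  assumes "continuous_on K F" and "K \<in> sets borel" and "B \<in> sets borel"
  shows "F -` B \<inter> K \<in> sets borel"
  using measurable_sets[OF borel_measurable_continuous_on_restrict[OF assms(1)] assms(3)] assms(2)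
  by (simp add: sets_restrict_space_iff space_restrict_space)

lemma set_integral_distr_concentrated:
  fixes \<phi> :: "'b::topological_space \<Rightarrow> real"
  assumes "h \<in> measurable M borel" and "S \<in> sets M" and "AE w in M. w \<in> S"
    and "K \<in> sets borel" and "h ` S \<subseteq> K" and "set_borel_measurable borel K \<phi>"
  shows "(LINT y:K|distr M borel h. \<phi> y) = (LINT w:S|M. \<phi> (h w))"
proof -
  have [measurable]: "(\<lambda>y. indicator K y *\<^sub>R \<phi> y) \<in> borel_measurable borel"
    using assms(6) by (simp add: set_borel_measurable_def)
  note [measurable] = assms(1,2)
  have "(LINT y:K|distr M borel h. \<phi> y) = (\<integral>w. indicator K (h w) *\<^sub>R \<phi> (h w) \<partial>M)"
    unfolding set_lebesgue_integral_def by (rule integral_distr) measurable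
  also have "\<dots> = (\<integral>w. indicator S w *\<^sub>R (indicator K (h w) *\<^sub>R \<phi> (h w)) \<partial>M)"
    by (rule integral_cong_AE) (use assms(3) in \<open>measurable, auto\<close>)
  also have "\<dots> = (LINT w:S|M. \<phi> (h w))"
    unfolding set_lebesgue_integral_def
    by (rule Bochner_Integration.integral_cong) (use assms(5) in \<open>auto simp: indicator_def\<close>)
  finally show ?thesis .
qed

lemma image_birkhoff_basin_subset:
  fixes h :: "'a::topological_space \<Rightarrow> 'b::topological_space"
  assumes "sets M = sets borel" and "S \<in> sets borel" and "AE w in M. w \<in> S" and "K \<in> sets borel"
    and "G ` S \<subseteq> S" and "h ` S \<subseteq> K" and "continuous_on S h" and "h \<in> borel_measurable borel"
    and "\<And>z. z \<in> S \<Longrightarrow> h (G z) = F (h z)"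
  shows "h ` birkhoff_basin G S M \<subseteq> birkhoff_basin F K (distr M borel h)"
proof
  fix y assume "y \<in> h ` birkhoff_basin G S M"
  then obtain z where z: "z \<in> birkhoff_basin G S M" and y: "y = h z" by blast
  have "z \<in> S" using z by (simp add: birkhoff_basin_def)
  have hM: "h \<in> measurable M borel"
    using assms(8) by (simp add: measurable_cong_sets[OF assms(1) refl])
  have "birkhoff_avg F \<phi> y \<longlonglongrightarrow> (LINT y:K|distr M borel h. \<phi> y)" if \<phi>: "continuous_on K \<phi>" for \<phi>
  proof -
    have "continuous_on S (\<lambda>w. \<phi> (h w))"
      using continuous_on_compose2[OF \<phi> assms(7,6)] .
    then have "birkhoff_avg G (\<lambda>w. \<phi> (h w)) z \<longlonglongrightarrow> (LINT w:S|M. \<phi> (h w))"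
      using z by (simp add: birkhoff_basin_def)
    moreover have "(LINT y:K|distr M borel h. \<phi> y) = (LINT w:S|M. \<phi> (h w))"
      using assms(1-4,6) borel_measurable_continuous_on_indicator[OF assms(4) \<phi>]
      by (intro set_integral_distr_concentrated hM) (auto simp: set_borel_measurable_def)
    ultimately show ?thesis
      using birkhoff_avg_semiconj_on[of G S h F, OF assms(5,9) \<open>z \<in> S\<close>] y by simp
  qed
  moreover have "y \<in> K" using assms(6) \<open>z \<in> S\<close> y by blast
  ultimately show "y \<in> birkhoff_basin F K (distr M borel h)"
    by (simp add: birkhoff_basin_def)
qed

lemma emeasure_distr_preimage_semiconj:
  assumes "sets M = sets borel" and "S \<in> sets borel" and "AE w in M. w \<in> S"
    and "h \<in> borel_measurable borel" and "h ` S \<subseteq> K" and "\<And>z. z \<in> S \<Longrightarrow> h (G z) = F (h z)"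
    and invariant: "\<And>A. A \<in> sets borel \<Longrightarrow> emeasure M (G -` A \<inter> S) = emeasure M A"
    and "B \<in> sets borel" and "F -` B \<inter> K \<in> sets borel"
  shows "emeasure (distr M borel h) (F -` B \<inter> K) = emeasure (distr M borel h) B"
proof -
  have hM: "h \<in> measurable M borel"
    using assms(4) by (simp add: measurable_cong_sets[OF assms(1) refl])
  have space: "space M = UNIV"
    using sets_eq_imp_space_eq[OF assms(1)] by simp
  have restrict: "emeasure M A = emeasure M (A \<inter> S)" if "A \<in> sets borel" for A
    by (rule emeasure_eq_AE) (use assms(1-3) that in auto)
  have "emeasure (distr M borel h) (F -` B \<inter> K) = emeasure M (h -` (F -` B \<inter> K) \<inter> S)"
    using assms(1,9) measurable_sets[OF assms(4,9)] hM
    by (simp add: emeasure_distr space restrict)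
  also have "h -` (F -` B \<inter> K) \<inter> S = G -` (h -` B) \<inter> S"
    using assms(5,6) by auto
  also have "emeasure M (G -` (h -` B) \<inter> S) = emeasure (distr M borel h) B"
    using assms(8) measurable_sets[OF assms(4,8)] hM
    by (simp add: invariant emeasure_distr space)
  finally show ?thesis .
qed

lemma emeasure_le_distr_image:
  assumes "h \<in> measurable M N" and "A \<in> sets M" and "B \<in> sets N" and "h ` A \<subseteq> B"
  shows "emeasure M A \<le> emeasure (distr M N h) B"
  using assms by (auto simp: emeasure_distr intro!: emeasure_mono dest: sets.sets_into_space)

lemma measurable_fibre_flip:
  fixes r :: "real \<Rightarrow> real"
  assumes [measurable]: "p \<in> measurable M borel" "C \<in> sets M" "r \<in> borel_measurable borel"
  shows "(\<lambda>(\<omega>, x). (p \<omega>, if \<omega> \<in> C then x else r x)) \<in> measurable (M \<Otimes>\<^sub>M lborel) (distr M borel p \<Otimes>\<^sub>M lborel)"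
  by measurable

lemma distr_fibre_flip:
  fixes r :: "real \<Rightarrow> real"
  assumes "prob_space M" and [measurable]: "p \<in> measurable M borel" "C \<in> sets M" "r \<in> borel_measurable borel"
    and "distr lborel borel r = lborel"
  shows "distr (M \<Otimes>\<^sub>M lborel) (distr M borel p \<Otimes>\<^sub>M lborel) (\<lambda>(\<omega>, x). (p \<omega>, if \<omega> \<in> C then x else r x))
    = distr M borel p \<Otimes>\<^sub>M lborel"
    (is "distr _ _ ?h = ?M0")
proof (rule sym, rule pair_measure_eqI)
  show "sigma_finite_measure (distr M borel p)"
    using prob_space_imp_sigma_finite[OF prob_space.prob_space_distr[OF assms(1,2)]] .
  show "sigma_finite_measure (lborel :: real measure)"
    by (rule sigma_finite_lborel)
  show "sets ?M0 = sets (distr (M \<Otimes>\<^sub>M lborel) ?M0 ?h)"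
    by simp
  fix A B assume A: "A \<in> sets (distr M borel p)" and B: "B \<in> sets (lborel :: real measure)"
  define X where "X = p -` A \<inter> space M"
  have [measurable]: "X \<in> sets M" "A \<in> sets borel" "B \<in> sets borel" "r -` B \<in> sets borel"
    using A B measurable_sets[OF assms(2)] measurable_sets[OF assms(4)] by (auto simp: X_def)
  have "emeasure lborel (r -` B) = emeasure (distr lborel borel r) B"
    using B by (subst emeasure_distr) (auto simp: measurable_lborel1)
  then have R_B: "emeasure lborel (r -` B) = emeasure lborel B"
    by (simp add: assms(5))
  have "?h -` (A \<times> B) \<inter> space (M \<Otimes>\<^sub>M lborel) = (X \<inter> C) \<times> B \<union> (X - C) \<times> (r -` B)"
    using sets.sets_into_space[OF assms(3)] by (auto simp: space_pair_measure X_def split: if_splits)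
  then have "emeasure (distr (M \<Otimes>\<^sub>M lborel) ?M0 ?h) (A \<times> B)
      = emeasure (M \<Otimes>\<^sub>M lborel) ((X \<inter> C) \<times> B \<union> (X - C) \<times> (r -` B))"
    using A B by (subst emeasure_distr) (auto intro: measurable_fibre_flip[OF assms(2-4)])
  also have "\<dots> = emeasure M (X \<inter> C) * emeasure lborel B + emeasure M (X - C) * emeasure lborel B"
    by (subst plus_emeasure[symmetric]) (auto simp: lborel.emeasure_pair_measure_Times R_B)
  also have "\<dots> = emeasure M X * emeasure lborel B"
    using plus_emeasure[of "X \<inter> C" M "X - C"] \<open>X \<in> sets M\<close> assms(3)
    by (simp add: distrib_right[symmetric] Int_Diff_Un Int_Diff_disjoint)
  also have "emeasure M X = emeasure (distr M borel p) A"
    using A by (simp add: emeasure_distr X_def)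
  finally show "emeasure (distr M borel p) A * emeasure lborel B
      = emeasure (distr (M \<Otimes>\<^sub>M lborel) ?M0 ?h) (A \<times> B)" ..
qed

section \<open>Physical measures of step skew-products\<close>

lemma basin_eq_birkhoff_basin: "basin H Sig \<mu> = birkhoff_basin H (Sig \<times> II) \<mu>"
  by (simp add: basin_def birkhoff_basin_def birkhoff_avg_def[abs_def])

lemma invariant_prob_AE:
  assumes "invariant_prob H Sig \<mu>" and "Sig \<times> II \<in> sets borel"
  shows "AE z in \<mu>. z \<in> Sig \<times> II"
proof -
  interpret prob_space \<mu>
    using assms(1) by (simp add: invariant_prob_def)
  show ?thesis
    using assms by (subst AE_in_set_eq_1) (auto simp: invariant_prob_def emeasure_eq_measure)
qed

lemma invariant_prob_distr_semiconj:
  assumes "invariant_prob G SA \<mu>" and "closed (SA \<times> II)" and "closed (SN \<times> II)"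
    and "continuous_on (SN \<times> II) F" and "h \<in> borel_measurable borel"
    and "h ` (SA \<times> II) \<subseteq> SN \<times> II" and "\<And>z. z \<in> SA \<times> II \<Longrightarrow> h (G z) = F (h z)"
  shows "invariant_prob F SN (distr \<mu> borel h)"
proof -
  have \<mu>: "prob_space \<mu>" "sets \<mu> = sets borel" "emeasure \<mu> (SA \<times> II) = 1"
    and invariant: "\<And>A. A \<in> sets borel \<Longrightarrow> emeasure \<mu> (G -` A \<inter> (SA \<times> II)) = emeasure \<mu> A"
    using assms(1) by (auto simp: invariant_prob_def)
  have hM: "h \<in> measurable \<mu> borel"
    using assms(5) by (simp add: measurable_cong_sets[OF \<mu>(2) refl])
  have SA: "SA \<times> II \<in> sets borel" and SN: "SN \<times> II \<in> sets borel"
    using assms(2,3) by (simp_all add: borel_closed)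
  have AE: "AE z in \<mu>. z \<in> SA \<times> II"
    using invariant_prob_AE[OF assms(1) SA] .
  have "F -` B \<inter> (SN \<times> II) \<in> sets borel" if "B \<in> sets borel" for B
    using continuous_on_vimage_Int_sets_borel[OF assms(4) SN that] .
  then have "emeasure (distr \<mu> borel h) (F -` B \<inter> (SN \<times> II)) = emeasure (distr \<mu> borel h) B"
    if "B \<in> sets borel" for B
    using emeasure_distr_preimage_semiconj[where G=G and F=F, OF \<mu>(2) SA AE assms(5,6)] assms(7)
      invariant that by blast
  moreover have "emeasure (distr \<mu> borel h) (SN \<times> II) = 1"
  proof -
    interpret prob_space "distr \<mu> borel h"
      by (rule prob_space.prob_space_distr[OF \<mu>(1) hM])
    have "emeasure (distr \<mu> borel h) (SN \<times> II) \<ge> emeasure \<mu> (SA \<times> II)"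
      using \<mu>(2) SA SN assms(6) by (intro emeasure_le_distr_image hM) auto
    then show ?thesis
      using \<mu>(3) emeasure_le_1 by (metis order_antisym)
  qed
  ultimately show ?thesis
    using prob_space.prob_space_distr[OF \<mu>(1) hM] by (simp add: invariant_prob_def)
qed

lemma continuous_on_seq_coord: "continuous_on S (\<lambda>\<omega>::seq. g (\<omega> k))"
  by (rule continuous_on_subset[OF continuous_on_compose2[OF
        Topological_Spaces.continuous_on_discrete[of UNIV g] continuous_on_product_coordinates]]) auto

lemma closed_seq_coord: "closed {\<omega>::seq. \<omega> k \<in> A}"
proof -
  have "closed ((\<lambda>\<omega>::seq. \<omega> k) -` A)"
    by (rule closed_vimage)
      (auto simp: closed_def discrete_topology_class.open_discrete intro: continuous_on_product_coordinates)
  then show ?thesis by (simp add: vimage_def)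
qed

definition coordinate_test :: "(int \<times> nat) option \<Rightarrow> seq \<times> real \<Rightarrow> real" where
  "coordinate_test t z = (case t of None \<Rightarrow> snd z | Some (k, a) \<Rightarrow> if fst z k = a then 1 else 0)"

lemma continuous_on_coordinate_test: "continuous_on S (coordinate_test t)"
proof (cases t)
  case (Some ka)
  obtain k a where "ka = (k, a)" by fastforce
  then show ?thesis
    using Some continuous_on_compose2[OF continuous_on_seq_coord[of UNIV "\<lambda>b. if b = a then 1 else 0 :: real" k]
        continuous_on_fst[OF continuous_on_id]]
    by (simp add: coordinate_test_def[abs_def])
qed (simp add: coordinate_test_def[abs_def] continuous_on_snd[OF continuous_on_id])

lemma coordinate_test_separates: "x \<noteq> y \<Longrightarrow> \<exists>t. coordinate_test t x \<noteq> coordinate_test t y"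
proof (cases "fst x = fst y")
  case True
  assume "x \<noteq> y"
  then have "coordinate_test None x \<noteq> coordinate_test None y"
    using True by (simp add: coordinate_test_def prod_eq_iff)
  then show ?thesis by blast
next
  case False
  then obtain k where "fst x k \<noteq> fst y k" by auto
  then have "coordinate_test (Some (k, fst x k)) x \<noteq> coordinate_test (Some (k, fst x k)) y"
    by (simp add: coordinate_test_def)
  then show ?thesis by blast
qed

lemma basin_borel:
  assumes "compact (Sig \<times> II)" and "closed (Sig \<times> II)"
    and "continuous_on (Sig \<times> II) H" and "H ` (Sig \<times> II) \<subseteq> Sig \<times> II"
    and "prob_space \<nu>" and "sets \<nu> = sets borel"
  shows "basin H Sig \<nu> \<in> sets borel"
  unfolding basin_eq_birkhoff_basin
  by (rule birkhoff_basin_borel[where g=coordinate_test, OF assms(5,6,1) borel_closed[OF assms(2)]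
        assms(3,4) continuous_on_coordinate_test])
    (use coordinate_test_separates in blast)

lemma sets_pair_lborel_eq_borel:
  "sets M = sets (borel :: seq measure) \<Longrightarrow> sets (M \<Otimes>\<^sub>M lborel) = sets (borel :: (seq \<times> real) measure)"
  using sets_pair_measure_cong[OF _ sets_lborel] borel_prod[where 'a=seq and 'b=real] by metis

lemma physical_distr_semiconj:
  fixes h G F :: "seq \<times> real \<Rightarrow> seq \<times> real"
  assumes "physical G SA lam \<mu>"
    and "closed (SA \<times> II)" and "compact (SN \<times> II)" and "closed (SN \<times> II)"
    and "G ` (SA \<times> II) \<subseteq> SA \<times> II" and "F ` (SN \<times> II) \<subseteq> SN \<times> II"
    and "continuous_on (SN \<times> II) F" and "continuous_on UNIV h"
    and "h ` (SA \<times> II) \<subseteq> SN \<times> II" and "\<And>z. z \<in> SA \<times> II \<Longrightarrow> h (G z) = F (h z)"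
    and "sets lam0 = sets borel" and "h \<in> measurable (lam \<Otimes>\<^sub>M lborel) (lam0 \<Otimes>\<^sub>M lborel)"
    and "distr (lam \<Otimes>\<^sub>M lborel) (lam0 \<Otimes>\<^sub>M lborel) h = lam0 \<Otimes>\<^sub>M lborel"
  shows "physical F SN lam0 (distr \<mu> borel h) \<and> h ` basin G SA \<mu> \<subseteq> basin F SN (distr \<mu> borel h)"
proof -
  have invG: "invariant_prob G SA \<mu>"
    and pos: "emeasure (lam \<Otimes>\<^sub>M lborel) (basin G SA \<mu>) > 0"
    using assms(1) by (auto simp: physical_def)
  have \<mu>: "prob_space \<mu>" "sets \<mu> = sets borel"
    using invG by (auto simp: invariant_prob_def)
  have h: "h \<in> borel_measurable borel"
    using assms(8) by (rule borel_measurable_continuous_onI)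
  have SA: "SA \<times> II \<in> sets borel" and SN: "SN \<times> II \<in> sets borel"
    using assms(2,4) by (simp_all add: borel_closed)
  have invF: "invariant_prob F SN (distr \<mu> borel h)"
    using invariant_prob_distr_semiconj[OF invG assms(2,4,7) h assms(9,10)] .
  then have "basin F SN (distr \<mu> borel h) \<in> sets borel"
    using assms(3,4,6,7) by (intro basin_borel) (auto simp: invariant_prob_def)
  moreover have incl: "h ` basin G SA \<mu> \<subseteq> basin F SN (distr \<mu> borel h)"
    unfolding basin_eq_birkhoff_basin
    using \<mu>(2) SA invariant_prob_AE[OF invG SA] SN assms(5,9,10) continuous_on_subset[OF assms(8)] h
    by (intro image_birkhoff_basin_subset) auto
  moreover have "basin G SA \<mu> \<in> sets (lam \<Otimes>\<^sub>M lborel)"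
    using pos by (intro emeasure_neq_0_sets) simp
  ultimately have "emeasure (lam \<Otimes>\<^sub>M lborel) (basin G SA \<mu>)
      \<le> emeasure (lam0 \<Otimes>\<^sub>M lborel) (basin F SN (distr \<mu> borel h))"
    using emeasure_le_distr_image[OF assms(12)] sets_pair_lborel_eq_borel[OF assms(11)]
    by (simp add: assms(13))
  with pos invF incl show ?thesis
    by (simp add: physical_def)
qed

section \<open>The skew-products F and G\<close>

lemma closed_seq_coord2: "closed {\<omega>::seq. P (\<omega> k) (\<omega> l)}"
proof -
  have "{\<omega>::seq. P (\<omega> k) (\<omega> l)} = (\<Inter>a. {\<omega>. \<omega> k \<in> - {a}} \<union> {\<omega>. \<omega> l \<in> {b. P a b}})"
    by auto
  moreover have "closed (\<Inter>a. {\<omega>::seq. \<omega> k \<in> - {a}} \<union> {\<omega>. \<omega> l \<in> {b. P a b}})"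
    by (intro closed_INT ballI closed_Un closed_seq_coord)
  ultimately show ?thesis by simp
qed

lemma closed_SigmaN: "closed (SigmaN N)"
proof -
  have "SigmaN N = (\<Inter>n. {\<omega>. \<omega> n \<in> {1..N}})"
    by (auto simp: SigmaN_def)
  moreover have "closed (\<Inter>n. {\<omega>::seq. \<omega> n \<in> {1..N}})"
    by (intro closed_INT ballI closed_seq_coord)
  ultimately show ?thesis by simp
qed

lemma compact_SigmaN: "compact (SigmaN N)"
proof -
  have "SigmaN N = PiE UNIV (\<lambda>_. {1..N})"
    by (auto simp: SigmaN_def PiE_def extensional_def)
  moreover have "compactin (product_topology (\<lambda>_. euclidean) UNIV) (PiE (UNIV :: int set) (\<lambda>_. {1..N::nat}))"
    by (subst compactin_PiE) (auto simp: compactin_euclidean_iff intro: finite_imp_compact)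
  ultimately show ?thesis
    by (simp add: euclidean_product_topology compactin_euclidean_iff)
qed

lemma closed_SigmaA: "closed (SigmaA N f)"
proof -
  have "SigmaA N f = (\<Inter>n. {\<omega>. Aadm N f (\<omega> n) (\<omega> (n + 1))})"
    by (auto simp: SigmaA_def Aadm_def)
  moreover have "closed (\<Inter>n. {\<omega>::seq. Aadm N f (\<omega> n) (\<omega> (n + 1))})"
    by (intro closed_INT ballI closed_seq_coord2)
  ultimately show ?thesis by simp
qed

lemma closed_II: "closed II" and compact_II: "compact II"
  by (simp_all add: II_def)

lemma continuous_on_shift: "continuous_on S shift"
  unfolding shift_def
  by (intro continuous_on_coordinatewise_then_product continuous_on_subset[OF continuous_on_product_coordinates]) auto

lemma continuous_on_proj: "continuous_on S (proj N)"
  unfolding proj_def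
  by (intro continuous_on_coordinatewise_then_product continuous_on_seq_coord)

lemma continuous_on_PiMap: "continuous_on UNIV (PiMap N)"
proof -
  let ?C = "{z :: seq \<times> real. fst z 0 \<le> N}"
  have C: "closed ?C" "closed (- ?C)"
    using closed_vimage_fst[OF closed_seq_coord[of 0 "{..N}"]]
      closed_vimage_fst[OF closed_seq_coord[of 0 "- {..N}"]]
    by (simp_all add: vimage_def Compl_eq)
  have "continuous_on (?C \<union> - ?C) (\<lambda>z. if fst z 0 \<le> N then (proj N (fst z), snd z) else (proj N (fst z), R (snd z)))"
  proof (rule continuous_on_cases[OF C])
    have "continuous_on S (\<lambda>z. proj N (fst z))" for S :: "(seq \<times> real) set"
      by (rule continuous_on_compose2[OF continuous_on_proj continuous_on_fst[OF continuous_on_id]]) auto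
    then show "continuous_on ?C (\<lambda>z. (proj N (fst z), snd z))"
      "continuous_on (- ?C) (\<lambda>z. (proj N (fst z), R (snd z)))"
      unfolding R_def
      by (intro continuous_on_Pair continuous_on_diff continuous_on_const continuous_on_snd
          continuous_on_id; assumption?)+
  qed auto
  moreover have "PiMap N = (\<lambda>z. if fst z 0 \<le> N then (proj N (fst z), snd z) else (proj N (fst z), R (snd z)))"
    by (auto simp: PiMap_def fun_eq_iff)
  ultimately show ?thesis by simp
qed

lemma R_II: "x \<in> II \<Longrightarrow> R x \<in> II"
  by (auto simp: R_def II_def)

lemma R_R [simp]: "R (R x) = x"
  by (simp add: R_def)

lemma lborel_distr_R: "distr lborel borel R = (lborel :: real measure)"
proof -
  have "R = (\<lambda>x. 1 + (-1) * x)" by (auto simp: R_def)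
  then show ?thesis
    using lborel_real_affine[of "-1" 1] by (simp add: density_1)
qed

lemma PiMap_eq_fibre_flip: "PiMap N = (\<lambda>(\<omega>, x). (proj N \<omega>, if \<omega> \<in> {\<omega>. \<omega> 0 \<le> N} then x else R x))"
  by (simp add: PiMap_def)

lemma C1_diffeo_continuous_on: "C1_diffeo_onto_image h \<Longrightarrow> continuous_on II h"
  unfolding C1_diffeo_onto_image_def by (metis DERIV_continuous_on)

lemma C1_diffeo_maps: "C1_diffeo_onto_image h \<Longrightarrow> x \<in> II \<Longrightarrow> h x \<in> II"
  unfolding C1_diffeo_onto_image_def by blast

lemma IP_IR_disjoint: "i \<in> IP N f \<Longrightarrow> i \<notin> IR N f"
proof
  assume "i \<in> IP N f" "i \<in> IR N f"
  then have "f i 0 < f i 1" "f i 1 < f i 0"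
    by (auto simp: IP_def IR_def II_def monotone_on_def)
  then show False by simp
qed

lemma IP_le: "i \<in> IP N f \<Longrightarrow> i \<le> N" and IR_le: "i \<in> IR N f \<Longrightarrow> i \<le> N"
  by (simp_all add: IP_def IR_def)

text \<open>The \<open>i\<close>-th fibre map of \<open>G\<close>, read in the chart of the next symbol \<open>j\<close> (flipped by \<open>R\<close>
  when \<open>j > N\<close>), is \<open>f\<^sub>i\<close> read in the chart of \<open>i\<close>; the transition matrix is designed for this.\<close>
lemma gmap_chart:
  assumes "Aadm N f i j"
  shows "(if j \<le> N then gmap N f i x else R (gmap N f i x)) = f (bar N i) (if i \<le> N then x else R x)"
  using assms IP_IR_disjoint[of i N f] IP_IR_disjoint[of "i - N" N f] IP_le[of i N f] IR_le[of i N f]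
  by (auto simp: Aadm_def gmap_def bar_def)

lemma SigmaA_iff: "\<omega> \<in> SigmaA N f \<longleftrightarrow> (\<forall>n. Aadm N f (\<omega> n) (\<omega> (n + 1)))"
  by (auto simp: SigmaA_def Aadm_def)

lemma SigmaA_range: "\<omega> \<in> SigmaA N f \<Longrightarrow> \<omega> n \<in> {1..2 * N}"
  by (simp add: SigmaA_def)

lemma SigmaA_Aadm0: "\<omega> \<in> SigmaA N f \<Longrightarrow> Aadm N f (\<omega> 0) (\<omega> 1)"
  unfolding SigmaA_iff by (metis add_0)

lemma shift_SigmaA: "\<omega> \<in> SigmaA N f \<Longrightarrow> shift \<omega> \<in> SigmaA N f"
  unfolding SigmaA_iff shift_def by (metis add.assoc)

lemma shift_SigmaN: "\<xi> \<in> SigmaN N \<Longrightarrow> shift \<xi> \<in> SigmaN N"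
  by (auto simp: SigmaN_def shift_def)

lemma proj_SigmaA: "\<omega> \<in> SigmaA N f \<Longrightarrow> proj N \<omega> \<in> SigmaN N"
  unfolding SigmaN_def proj_def using SigmaA_range by (fastforce simp: bar_def)

lemma PiMap_Gmap:
  assumes "z \<in> SigmaA N f \<times> II"
  shows "PiMap N (Gmap N f z) = Fmap f (PiMap N z)"
proof -
  obtain \<omega> x where z: "z = (\<omega>, x)" by fastforce
  have "Aadm N f (\<omega> 0) (\<omega> 1)"
    using assms z SigmaA_Aadm0 by simp
  from gmap_chart[OF this] show ?thesis
    by (simp add: z PiMap_def Gmap_def Fmap_def proj_def shift_def)
qed

lemma Gmap_maps:
  assumes "\<forall>i\<in>{1..N}. C1_diffeo_onto_image (f i)"
  shows "Gmap N f ` (SigmaA N f \<times> II) \<subseteq> SigmaA N f \<times> II"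
proof (rule image_subsetI)
  fix z assume "z \<in> SigmaA N f \<times> II"
  then obtain \<omega> x where z: "z = (\<omega>, x)" and \<omega>: "\<omega> \<in> SigmaA N f" and x: "x \<in> II"
    by blast
  have "Aadm N f (\<omega> 0) (\<omega> 1)" and "\<omega> 0 \<in> {1..2 * N}"
    using \<omega> SigmaA_Aadm0 SigmaA_range by blast+
  moreover have "bar N (\<omega> 0) \<in> {1..N}" and "(if \<omega> 0 \<le> N then x else R x) \<in> II"
    using \<open>\<omega> 0 \<in> {1..2 * N}\<close> x R_II by (auto simp: bar_def)
  then have "f (bar N (\<omega> 0)) (if \<omega> 0 \<le> N then x else R x) \<in> II"
    using assms C1_diffeo_maps by blast
  ultimately have "gmap N f (\<omega> 0) x \<in> II"
    using gmap_chart[of N f "\<omega> 0" "\<omega> 1" x] R_II[of "R (gmap N f (\<omega> 0) x)"]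
    by (cases "\<omega> 1 \<le> N") (simp, metis R_R)
  with \<omega> show "Gmap N f z \<in> SigmaA N f \<times> II"
    by (simp add: z Gmap_def shift_SigmaA)
qed

lemma PiMap_maps: "PiMap N ` (SigmaA N f \<times> II) \<subseteq> SigmaN N \<times> II"
  by (auto simp: PiMap_def proj_SigmaA R_II)

lemma Fmap_maps:
  assumes "\<forall>i\<in>{1..N}. C1_diffeo_onto_image (f i)"
  shows "Fmap f ` (SigmaN N \<times> II) \<subseteq> SigmaN N \<times> II"
proof (rule image_subsetI)
  fix z assume "z \<in> SigmaN N \<times> II"
  then obtain \<xi> p where z: "z = (\<xi>, p)" and "\<xi> \<in> SigmaN N" and "p \<in> II"
    by blast
  then have "f (\<xi> 0) p \<in> II"
    using assms C1_diffeo_maps by (auto simp: SigmaN_def)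
  with \<open>\<xi> \<in> SigmaN N\<close> show "Fmap f z \<in> SigmaN N \<times> II"
    by (simp add: z Fmap_def shift_SigmaN)
qed

lemma continuous_on_Fmap:
  assumes "\<forall>i\<in>{1..N}. C1_diffeo_onto_image (f i)"
  shows "continuous_on (SigmaN N \<times> II) (Fmap f)"
proof -
  define U where "U i = {\<xi> \<in> SigmaN N. \<xi> 0 = i} \<times> II" for i
  have "SigmaN N \<times> II = (\<Union>i\<in>{1..N}. U i)"
    by (auto simp: U_def SigmaN_def)
  moreover have "continuous_on (\<Union>i\<in>{1..N}. U i) (Fmap f)"
  proof (rule continuous_on_closed_Union)
    show "closed (U i)" for i
      unfolding U_def using closed_SigmaN closed_seq_coord[of 0 "{i}"]
      by (intro closed_Times closed_II) (simp add: Collect_conj_eq closed_Int)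
    show "continuous_on (U i) (Fmap f)" if "i \<in> {1..N}" for i
    proof -
      have "continuous_on II (f i)"
        using assms that by (simp add: C1_diffeo_continuous_on)
      then have "continuous_on (U i) (\<lambda>z. f i (snd z))"
        by (rule continuous_on_compose2[OF _ continuous_on_snd[OF continuous_on_id]]) (auto simp: U_def)
      moreover have "continuous_on (U i) (\<lambda>z. shift (fst z))"
        by (rule continuous_on_compose2[OF continuous_on_shift continuous_on_fst[OF continuous_on_id]]) auto
      ultimately have "continuous_on (U i) (\<lambda>z. (shift (fst z), f i (snd z)))"
        by (intro continuous_on_Pair)
      then show ?thesis
        by (rule continuous_on_cong[THEN iffD1, rotated -1]) (auto simp: U_def Fmap_def)
    qed
  qed simp
  ultimately show ?thesis by simp
qed

theorem lemma3p17:
  fixes N :: nat and f :: "nat \<Rightarrow> real \<Rightarrow> real"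
    and p :: "nat \<Rightarrow> real" and P :: "nat \<Rightarrow> nat \<Rightarrow> real"
    and lam :: "seq measure" and mu :: "(seq \<times> real) measure"
  assumes "N \<ge> 1"
    and "\<forall>i\<in>{1..N}. C1_diffeo_onto_image (f i)"
    and "markov_measure (2 * N) (Aadm N f) p P lam"
    and "symmetric_markov N p P"
    and "physical (Gmap N f) (SigmaA N f) lam mu"
  shows "physical (Fmap f) (SigmaN N) (distr lam borel (proj N)) (distr mu borel (PiMap N))
       \<and> PiMap N ` basin (Gmap N f) (SigmaA N f) mu
           \<subseteq> basin (Fmap f) (SigmaN N) (distr mu borel (PiMap N))"
proof -
  \<comment> \<open>Neither \<open>N \<ge> 1\<close>, nor the symmetry of \<open>lam\<close>, nor its cylinder values are needed: as \<open>R\<close>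
    preserves Lebesgue measure, \<open>PiMap N\<close> pushes \<open>lam \<Otimes> lborel\<close> forward to
    \<open>(proj N)\<^sub>* lam \<Otimes> lborel\<close> for every probability measure \<open>lam\<close>.\<close>
  have lam: "prob_space lam" "sets lam = sets borel"
    using assms(3) by (auto simp: markov_measure_def)
  have proj: "proj N \<in> measurable lam borel"
    using borel_measurable_continuous_onI[OF continuous_on_proj] by (simp add: measurable_cong_sets[OF lam(2) refl])
  have C: "{\<omega>. \<omega> 0 \<le> N} \<in> sets lam"
    using closed_seq_coord[of 0 "{..N}"] by (simp add: lam(2) borel_closed)
  have R: "R \<in> borel_measurable borel"
    unfolding R_def by measurable
  show ?thesis
  proof (rule physical_distr_semiconj[OF assms(5)])
    show "PiMap N \<in> measurable (lam \<Otimes>\<^sub>M lborel) (distr lam borel (proj N) \<Otimes>\<^sub>M lborel)"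
      unfolding PiMap_eq_fibre_flip by (rule measurable_fibre_flip[OF proj C R])
    show "distr (lam \<Otimes>\<^sub>M lborel) (distr lam borel (proj N) \<Otimes>\<^sub>M lborel) (PiMap N)
        = distr lam borel (proj N) \<Otimes>\<^sub>M lborel"
      unfolding PiMap_eq_fibre_flip by (rule distr_fibre_flip[OF lam(1) proj C R lborel_distr_R])
  qed (use assms(2) in \<open>auto simp: closed_SigmaA closed_SigmaN compact_SigmaN closed_II compact_II
      closed_Times compact_Times Gmap_maps Fmap_maps continuous_on_Fmap continuous_on_PiMap PiMap_maps
      PiMap_Gmap\<close>)
qed

end
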